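(* Let $\mathcal{S}$ be a finite set of road segments and $y_1,\dots,y_N$ (collectively $y_{[N]}$) the routes of $N$ historical trips, each a nonempty set of distinct segments. For each $n$ and $s\in y_n$ one observes $T'_{n,s}=\theta_s+\varepsilon_{n,s}$, where the $\theta_s$ are i.i.d. with mean $\mu$ and variance $\tau^2>0$, independent of the errors; for each $n$ the errors $(\varepsilon_{n,s})_{s\in y_n}$ have mean $0$ and covariances $\sigma_{s,t}$; errors from different trips are independent. Fix a route $y$ and suppose $\sigma_{s,t}\ge0$ for all $s,t\in y$. Let $\hat\Theta^{\ast(\mathrm{seg})}_y$ be the optimal segment-based estimator, $\hat\Theta^{\ast(\mathrm{g\text{-}seg})}_y$ the optimal generalized segment-based estimator with the single super-segment partition $\mathscr{S}_y=\{y\}$, and $\hat\Theta^{\ast(\mathrm{route})}_y$ the optimal route-based estimator with neighborhood $\delta(y)=\{y_n:y_n=y\}$. Then for any set of historical routes, $$R\big(\hat\Theta^{\ast(\mathrm{seg})}_y\mid y_{[N]}\big)\le R\big(\hat\Theta^{\ast(\mathrm{g\text{-}seg})}_y\mid y_{[N]}\big)\le R\big(\hat\Theta^{\ast(\mathrm{route})}_y\mid y_{[N]}\big).$$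
   Context: Convention $0/0=0$. $N_s=|\{n:s\in y_n\}|$; for a set $S$ of segments $N_S=|\{n:S\subseteq y_n\}|$; $M_{\delta(y)}=\sum_n\mathbf 1\{y_n\in\delta(y)\}$. The integrated risk is $R(\hat\Theta_y\mid y_{[N]})=\mathbb{E}[(\hat\Theta_y-\sum_{s\in y}\theta_s)^2\mid y_{[N]}]$, expectation over errors and prior of $\theta$, conditional on the historical routes. Segment-based estimator: $\sum_{s\in y}[(1-\phi_s(N_s))\mu+\phi_s(N_s)\sum_{n:s\in y_n}T'_{n,s}/N_s]$, $\phi_s(0)=0$. Generalized segment-based estimator with partition $\mathscr{S}_y$ of $y$ into disjoint nonempty super-segments: $\sum_{S\in\mathscr{S}_y}[(1-\phi_S(N_S))|S|\mu+\phi_S(N_S)\sum_{n:S\subseteq y_n}\sum_{s\in S}T'_{n,s}/N_S]$, $\phi_S(0)=0$. Route-based estimator with neighborhood $\delta(y)$ (a set of historical routes): $(1-\phi_{\delta(y)}(M_{\delta(y)}))|y|\mu+\phi_{\delta(y)}(M_{\delta(y)})\sum_{n:y_n\in\delta(y)}\sum_{s\in y_n}T'_{n,s}/M_{\delta(y)}$, $\phi_{\delta(y)}(0)=0$. In each class, "optimal" means the weights are chosen to minimize the integrated risk. *)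

theory Defs
  imports "HOL-Probability.Probability"
begin

definition N_seg :: "nat \<Rightarrow> (nat \<Rightarrow> 'seg set) \<Rightarrow> 'seg \<Rightarrow> nat" where
  "N_seg N ys s = card {n. n < N \<and> s \<in> ys n}"

definition N_set :: "nat \<Rightarrow> (nat \<Rightarrow> 'seg set) \<Rightarrow> 'seg set \<Rightarrow> nat" where
  "N_set N ys S = card {n. n < N \<and> S \<subseteq> ys n}"

definition M_nbhd :: "nat \<Rightarrow> (nat \<Rightarrow> 'seg set) \<Rightarrow> 'seg set \<Rightarrow> nat" where
  "M_nbhd N ys y = card {n. n < N \<and> ys n = y}"

definition obs :: "('seg \<Rightarrow> 'a \<Rightarrow> real) \<Rightarrow> (nat \<Rightarrow> 'seg \<Rightarrow> 'a \<Rightarrow> real) \<Rightarrow> nat \<Rightarrow> 'seg \<Rightarrow> 'a \<Rightarrow> real" where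
  "obs \<theta> \<epsilon> n s \<omega> = \<theta> s \<omega> + \<epsilon> n s \<omega>"

definition travel_model ::
  "'a measure \<Rightarrow> 'seg set \<Rightarrow> nat \<Rightarrow> (nat \<Rightarrow> 'seg set) \<Rightarrow> ('seg \<Rightarrow> 'a \<Rightarrow> real)
   \<Rightarrow> (nat \<Rightarrow> 'seg \<Rightarrow> 'a \<Rightarrow> real) \<Rightarrow> real \<Rightarrow> real \<Rightarrow> ('seg \<Rightarrow> 'seg \<Rightarrow> real) \<Rightarrow> bool" where
  "travel_model M S N ys \<theta> \<epsilon> \<mu> \<tau> \<sigma> \<longleftrightarrow>
     prob_space M \<and> finite S \<and> \<tau> > 0 \<and>
     (\<forall>n<N. ys n \<noteq> {} \<and> ys n \<subseteq> S) \<and>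
     \<comment> \<open>theta_s: square integrable, identically distributed, mean mu, variance tau^2\<close>
     (\<forall>s\<in>S. \<theta> s \<in> borel_measurable M \<and> integrable M (\<lambda>\<omega>. (\<theta> s \<omega>)\<^sup>2)
        \<and> prob_space.expectation M (\<theta> s) = \<mu> \<and> prob_space.variance M (\<theta> s) = \<tau>\<^sup>2) \<and>
     (\<forall>s\<in>S. \<forall>t\<in>S. distr M borel (\<theta> s) = distr M borel (\<theta> t)) \<and>
     \<comment> \<open>errors: square integrable, mean zero, covariances sigma (same for every trip)\<close>
     (\<forall>n<N. \<forall>s\<in>ys n. \<epsilon> n s \<in> borel_measurable M \<and> integrable M (\<lambda>\<omega>. (\<epsilon> n s \<omega>)\<^sup>2)
        \<and> prob_space.expectation M (\<epsilon> n s) = 0) \<and>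
     (\<forall>n<N. \<forall>s\<in>ys n. \<forall>t\<in>ys n.
        prob_space.expectation M (\<lambda>\<omega>. \<epsilon> n s \<omega> * \<epsilon> n t \<omega>) = \<sigma> s t) \<and>
     \<comment> \<open>mutual independence: the theta_s (s in S) and the error vectors of the trips\<close>
     prob_space.indep_vars M
       (\<lambda>i. case i of Inl s \<Rightarrow> PiM {s} (\<lambda>_. borel) | Inr n \<Rightarrow> PiM (ys n) (\<lambda>_. borel))
       (\<lambda>i \<omega>. case i of Inl s \<Rightarrow> (\<lambda>t\<in>{s}. \<theta> t \<omega>) | Inr n \<Rightarrow> (\<lambda>t\<in>ys n. \<epsilon> n t \<omega>))
       (Inl ` S \<union> Inr ` {..<N})"

text \<open>Segment-based estimator with weights phi s (= phi_s(N_s)).\<close>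
definition seg_est :: "nat \<Rightarrow> (nat \<Rightarrow> 'seg set) \<Rightarrow> (nat \<Rightarrow> 'seg \<Rightarrow> 'a \<Rightarrow> real) \<Rightarrow> real
    \<Rightarrow> 'seg set \<Rightarrow> ('seg \<Rightarrow> real) \<Rightarrow> 'a \<Rightarrow> real" where
  "seg_est N ys T \<mu> y \<phi> \<omega> =
     (\<Sum>s\<in>y. (1 - \<phi> s) * \<mu> +
        \<phi> s * ((\<Sum>n\<in>{n. n < N \<and> s \<in> ys n}. T n s \<omega>) / real (N_seg N ys s)))"

definition gseg_est :: "nat \<Rightarrow> (nat \<Rightarrow> 'seg set) \<Rightarrow> (nat \<Rightarrow> 'seg \<Rightarrow> 'a \<Rightarrow> real) \<Rightarrow> real
    \<Rightarrow> 'seg set set \<Rightarrow> ('seg set \<Rightarrow> real) \<Rightarrow> 'a \<Rightarrow> real" where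
  "gseg_est N ys T \<mu> P \<phi> \<omega> =
     (\<Sum>S\<in>P. (1 - \<phi> S) * real (card S) * \<mu> +
        \<phi> S * ((\<Sum>n\<in>{n. n < N \<and> S \<subseteq> ys n}. \<Sum>s\<in>S. T n s \<omega>) / real (N_set N ys S)))"

definition route_est :: "nat \<Rightarrow> (nat \<Rightarrow> 'seg set) \<Rightarrow> (nat \<Rightarrow> 'seg \<Rightarrow> 'a \<Rightarrow> real) \<Rightarrow> real
    \<Rightarrow> 'seg set \<Rightarrow> 'seg set set \<Rightarrow> real \<Rightarrow> 'a \<Rightarrow> real" where
  "route_est N ys T \<mu> y \<delta> \<phi> \<omega> =
     (1 - \<phi>) * real (card y) * \<mu> +
     \<phi> * ((\<Sum>n\<in>{n. n < N \<and> ys n \<in> \<delta>}. \<Sum>s\<in>ys n. T n s \<omega>)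
            / real (card {n. n < N \<and> ys n \<in> \<delta>}))"

definition risk :: "'a measure \<Rightarrow> ('seg \<Rightarrow> 'a \<Rightarrow> real) \<Rightarrow> 'seg set \<Rightarrow> ('a \<Rightarrow> real) \<Rightarrow> real" where
  "risk M \<theta> y \<Theta> = (\<integral>\<omega>. (\<Theta> \<omega> - (\<Sum>s\<in>y. \<theta> s \<omega>))\<^sup>2 \<partial>M)"

definition opt_seg_risk where
  "opt_seg_risk M \<theta> \<epsilon> \<mu> N ys y =
     Inf {risk M \<theta> y (seg_est N ys (obs \<theta> \<epsilon>) \<mu> y \<phi>) | \<phi>.
            \<forall>s\<in>y. N_seg N ys s = 0 \<longrightarrow> \<phi> s = 0}"

definition opt_gseg_risk where
  "opt_gseg_risk M \<theta> \<epsilon> \<mu> N ys y P =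
     Inf {risk M \<theta> y (gseg_est N ys (obs \<theta> \<epsilon>) \<mu> P \<phi>) | \<phi>.
            \<forall>S\<in>P. N_set N ys S = 0 \<longrightarrow> \<phi> S = 0}"

definition opt_route_risk where
  "opt_route_risk M \<theta> \<epsilon> \<mu> N ys y \<delta> =
     Inf {risk M \<theta> y (route_est N ys (obs \<theta> \<epsilon>) \<mu> y \<delta> \<phi>) | \<phi>.
            card {n. n < N \<and> ys n \<in> \<delta>} = 0 \<longrightarrow> \<phi> = 0}"

end

theory Submission
  imports Defs
begin

text \<open>Substituting \<open>T' = \<theta> + \<epsilon>\<close>, each of the three estimators takes the form
  \<open>\<Sum>s\<in>y. (1 - \<phi> s) \<mu> + \<phi> s \<theta> s + c s \<Sum>n\<in>A s. \<epsilon> n s\<close>, and independence gives it the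
  risk \<open>\<tau>\<^sup>2 \<Sum>s (1 - \<phi> s)\<^sup>2 + \<Sum>s t. c s c t |A s \<inter> A t| \<sigma> s t\<close>. The generalized
  estimator with weight \<open>p\<close> averages every segment over the trips \<open>G\<close> covering all of \<open>y\<close>,
  the route estimator over the trips \<open>R \<subseteq> G\<close> following exactly \<open>y\<close>. Giving the finer
  estimator the same constant weight \<open>p\<close> keeps the first term and, as \<open>\<sigma> \<ge> 0\<close> on \<open>y\<close>,
  can only lower the second, because \<open>|A s \<inter> A t| / (|A s| |A t|) \<le> 1 / |G|\<close> whenever
  \<open>G \<subseteq> A s \<inter> A t\<close>. Hence every risk of the coarser class is matched or beaten in the
  finer one, and the infima are ordered.\<close>

definition square_integrable :: "'a measure \<Rightarrow> ('a \<Rightarrow> real) \<Rightarrow> bool" where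
  "square_integrable M f \<longleftrightarrow> f \<in> borel_measurable M \<and> integrable M (\<lambda>x. (f x)\<^sup>2)"

lemma integrable_mult_square_integrable:
  assumes "square_integrable M f" "square_integrable M g"
  shows "integrable M (\<lambda>x. f x * g x)"
proof (rule Bochner_Integration.integrable_bound)
  show "integrable M (\<lambda>x. (f x)\<^sup>2 + (g x)\<^sup>2)" "(\<lambda>x. f x * g x) \<in> borel_measurable M"
    using assms by (auto simp: square_integrable_def)
  have "\<bar>f x * g x\<bar> \<le> (f x)\<^sup>2 + (g x)\<^sup>2" for x
    using sum_squares_bound[of "\<bar>f x\<bar>" "\<bar>g x\<bar>"] zero_le_mult_iff[of "\<bar>f x\<bar>" "\<bar>g x\<bar>"]
    unfolding abs_mult power2_abs by linarith
  then show "AE x in M. norm (f x * g x) \<le> norm ((f x)\<^sup>2 + (g x)\<^sup>2)" by simp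
qed

lemma square_integrable_add:
  assumes "square_integrable M f" "square_integrable M g"
  shows "square_integrable M (\<lambda>x. f x + g x)"
proof -
  have "(\<lambda>x. (f x + g x)\<^sup>2) = (\<lambda>x. (f x)\<^sup>2 + (g x)\<^sup>2 + 2 * (f x * g x))"
    by (simp add: power2_sum mult.assoc)
  then show ?thesis
    using assms integrable_mult_square_integrable[OF assms] by (auto simp: square_integrable_def)
qed

lemma square_integrable_mult_left:
  "square_integrable M f \<Longrightarrow> square_integrable M (\<lambda>x. c * f x)"
  by (auto simp: square_integrable_def power_mult_distrib)

lemma (in finite_measure) square_integrable_const: "square_integrable M (\<lambda>x. c)"
  by (simp add: square_integrable_def)

lemma (in finite_measure) square_integrable_sum:
  "(\<And>i. i \<in> I \<Longrightarrow> square_integrable M (f i)) \<Longrightarrow> square_integrable M (\<lambda>x. \<Sum>i\<in>I. f i x)"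
  by (induction I rule: infinite_finite_induct) (auto intro: square_integrable_add square_integrable_const)

lemma (in finite_measure) integrable_square_integrable:
  "square_integrable M f \<Longrightarrow> integrable M f"
  by (simp add: square_integrable_def square_integrable_imp_integrable)

lemma integral_sum_mult_sum:
  assumes "\<And>i. i \<in> I \<Longrightarrow> square_integrable M (f i)" "\<And>j. j \<in> J \<Longrightarrow> square_integrable M (g j)"
  shows "(\<integral>x. (\<Sum>i\<in>I. a i * f i x) * (\<Sum>j\<in>J. b j * g j x) \<partial>M)
    = (\<Sum>i\<in>I. \<Sum>j\<in>J. a i * b j * (\<integral>x. f i x * g j x \<partial>M))"
proof -
  have "(\<Sum>i\<in>I. a i * f i x) * (\<Sum>j\<in>J. b j * g j x) = (\<Sum>i\<in>I. \<Sum>j\<in>J. a i * b j * (f i x * g j x))" for x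
    by (simp add: sum_product ac_simps)
  moreover have "integrable M (\<lambda>x. f i x * g j x)" if "i \<in> I" "j \<in> J" for i j
    using assms that by (blast intro: integrable_mult_square_integrable)
  ultimately show ?thesis by (simp add: Bochner_Integration.integral_sum)
qed

lemma integral_square_add:
  assumes "square_integrable M f" "square_integrable M g"
  shows "(\<integral>x. (f x + g x)\<^sup>2 \<partial>M)
    = (\<integral>x. f x * f x \<partial>M) + 2 * (\<integral>x. f x * g x \<partial>M) + (\<integral>x. g x * g x \<partial>M)"
proof -
  have "(f x + g x)\<^sup>2 = f x * f x + 2 * (f x * g x) + g x * g x" for x
    by (simp add: power2_eq_square algebra_simps)
  then show ?thesis
    using assms by (simp add: integrable_mult_square_integrable)
qed

lemma (in prob_space) indep_vars_integral_mult:
  fixes f g :: "'b \<Rightarrow> real"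
  assumes indep: "indep_vars M' X I" and ij: "i \<in> I" "j \<in> I" "i \<noteq> j"
    and meas: "f \<in> borel_measurable (M' i)" "g \<in> borel_measurable (M' j)"
    and int: "integrable M (\<lambda>\<omega>. f (X i \<omega>))" "integrable M (\<lambda>\<omega>. g (X j \<omega>))"
  shows "(\<integral>\<omega>. f (X i \<omega>) * g (X j \<omega>) \<partial>M) = (\<integral>\<omega>. f (X i \<omega>) \<partial>M) * (\<integral>\<omega>. g (X j \<omega>) \<partial>M)"
proof -
  define h where "h k = (if k = i then f else g)" for k
  have "indep_vars M' X {i, j}"
    using indep ij by (blast intro: indep_vars_subset)
  then have "indep_vars (\<lambda>_. borel) (\<lambda>k \<omega>. h k (X k \<omega>)) {i, j}"
    by (rule indep_vars_compose2) (use meas in \<open>auto simp: h_def\<close>)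
  then have "(\<integral>\<omega>. (\<Prod>k\<in>{i, j}. h k (X k \<omega>)) \<partial>M) = (\<Prod>k\<in>{i, j}. \<integral>\<omega>. h k (X k \<omega>) \<partial>M)"
    by (rule indep_vars_lebesgue_integral[rotated]) (use int in \<open>auto simp: h_def\<close>)
  then show ?thesis
    using ij(3) by (simp add: h_def)
qed

lemma cInf_setcompr_mono:
  fixes f g :: "_ \<Rightarrow> real"
  assumes "\<And>p. 0 \<le> f p" "Q q\<^sub>0" "\<And>q. Q q \<Longrightarrow> \<exists>p. P p \<and> f p \<le> g q"
  shows "Inf {f p | p. P p} \<le> Inf {g q | q. Q q}"
proof (rule cInf_mono)
  show "bdd_below {f p | p. P p}"
    using assms(1) by (auto intro: bdd_belowI[of _ 0])
qed (use assms(2,3) in blast)+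

definition shrinkage_est ::
    "real \<Rightarrow> ('seg \<Rightarrow> 'a \<Rightarrow> real) \<Rightarrow> (nat \<Rightarrow> 'seg \<Rightarrow> 'a \<Rightarrow> real) \<Rightarrow> 'seg set
     \<Rightarrow> ('seg \<Rightarrow> real) \<Rightarrow> ('seg \<Rightarrow> real) \<Rightarrow> ('seg \<Rightarrow> nat set) \<Rightarrow> 'a \<Rightarrow> real" where
  "shrinkage_est \<mu> \<theta> \<epsilon> y \<phi> c A \<omega> =
     (\<Sum>s\<in>y. (1 - \<phi> s) * \<mu> + \<phi> s * \<theta> s \<omega> + c s * (\<Sum>n\<in>A s. \<epsilon> n s \<omega>))"

definition shrinkage_risk ::
    "real \<Rightarrow> ('seg \<Rightarrow> 'seg \<Rightarrow> real) \<Rightarrow> 'seg set \<Rightarrow> ('seg \<Rightarrow> real) \<Rightarrow> ('seg \<Rightarrow> real)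
     \<Rightarrow> ('seg \<Rightarrow> nat set) \<Rightarrow> real" where
  "shrinkage_risk \<tau> \<sigma> y \<phi> c A =
     (\<Sum>s\<in>y. (1 - \<phi> s)\<^sup>2 * \<tau>\<^sup>2) + (\<Sum>s\<in>y. \<Sum>t\<in>y. c s * c t * real (card (A s \<inter> A t)) * \<sigma> s t)"

lemma shrunk_average_split:
  assumes "finite B" "card B = 0 \<longrightarrow> p = 0"
  shows "(1 - p) * \<mu> + p * ((\<Sum>n\<in>B. t + a n) / real (card B))
    = (1 - p) * \<mu> + p * t + p / real (card B) * (\<Sum>n\<in>B. a n)"
  using assms by (cases "card B = 0") (auto simp: sum.distrib field_simps)

lemma seg_est_eq_shrinkage_est:
  assumes "\<forall>s\<in>y. N_seg N ys s = 0 \<longrightarrow> \<phi> s = 0"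
  shows "seg_est N ys (obs \<theta> \<epsilon>) \<mu> y \<phi>
    = shrinkage_est \<mu> \<theta> \<epsilon> y \<phi> (\<lambda>s. \<phi> s / real (N_seg N ys s)) (\<lambda>s. {n. n < N \<and> s \<in> ys n})"
  unfolding seg_est_def shrinkage_est_def obs_def N_seg_def
  by (intro ext sum.cong refl shrunk_average_split) (use assms in \<open>auto simp: N_seg_def\<close>)

lemma block_average_eq_shrinkage_est:
  assumes "finite B" "card B = 0 \<longrightarrow> p = 0"
  shows "(1 - p) * real (card y) * \<mu> + p * ((\<Sum>n\<in>B. \<Sum>s\<in>y. obs \<theta> \<epsilon> n s \<omega>) / real (card B))
    = shrinkage_est \<mu> \<theta> \<epsilon> y (\<lambda>_. p) (\<lambda>_. p / real (card B)) (\<lambda>_. B) \<omega>"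
proof -
  have "(\<Sum>n\<in>B. \<Sum>s\<in>y. obs \<theta> \<epsilon> n s \<omega>) = (\<Sum>s\<in>y. \<Sum>n\<in>B. \<theta> s \<omega> + \<epsilon> n s \<omega>)"
    unfolding obs_def by (rule sum.swap)
  then have "(1 - p) * real (card y) * \<mu> + p * ((\<Sum>n\<in>B. \<Sum>s\<in>y. obs \<theta> \<epsilon> n s \<omega>) / real (card B))
      = (\<Sum>s\<in>y. (1 - p) * \<mu>) + (\<Sum>s\<in>y. p * ((\<Sum>n\<in>B. \<theta> s \<omega> + \<epsilon> n s \<omega>) / real (card B)))"
    by (simp only: sum_divide_distrib sum_distrib_left sum_constant mult_ac)
  also have "\<dots> = (\<Sum>s\<in>y. (1 - p) * \<mu> + p * ((\<Sum>n\<in>B. \<theta> s \<omega> + \<epsilon> n s \<omega>) / real (card B)))"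
    by (simp only: sum.distrib)
  also have "\<dots> = shrinkage_est \<mu> \<theta> \<epsilon> y (\<lambda>_. p) (\<lambda>_. p / real (card B)) (\<lambda>_. B) \<omega>"
    unfolding shrinkage_est_def using assms by (intro sum.cong refl shrunk_average_split)
  finally show ?thesis .
qed

lemma gseg_est_single_eq_shrinkage_est:
  assumes "N_set N ys y = 0 \<longrightarrow> \<phi> y = 0"
  shows "gseg_est N ys (obs \<theta> \<epsilon>) \<mu> {y} \<phi>
    = shrinkage_est \<mu> \<theta> \<epsilon> y (\<lambda>_. \<phi> y) (\<lambda>_. \<phi> y / real (N_set N ys y)) (\<lambda>_. {n. n < N \<and> y \<subseteq> ys n})"
  unfolding gseg_est_def N_set_def
  by (simp only: sum.insert[OF finite.emptyI] empty_iff simp_thms sum.empty add_0_right)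
     (intro ext block_average_eq_shrinkage_est; use assms in \<open>auto simp: N_set_def\<close>)

lemma route_est_eq_shrinkage_est:
  fixes N :: nat and ys :: "nat \<Rightarrow> 'seg set" and \<delta> :: "'seg set set"
  defines "R \<equiv> {n. n < N \<and> ys n \<in> \<delta>}"
  assumes "\<delta> \<subseteq> {y}" "card R = 0 \<longrightarrow> q = 0"
  shows "route_est N ys (obs \<theta> \<epsilon>) \<mu> y \<delta> q
    = shrinkage_est \<mu> \<theta> \<epsilon> y (\<lambda>_. q) (\<lambda>_. q / real (card R)) (\<lambda>_. R)"
proof
  fix \<omega>
  have routes: "(\<Sum>n\<in>R. \<Sum>s\<in>ys n. obs \<theta> \<epsilon> n s \<omega>) = (\<Sum>n\<in>R. \<Sum>s\<in>y. obs \<theta> \<epsilon> n s \<omega>)"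
    using assms(2) by (intro sum.cong) (auto simp: R_def)
  show "route_est N ys (obs \<theta> \<epsilon>) \<mu> y \<delta> q \<omega>
      = shrinkage_est \<mu> \<theta> \<epsilon> y (\<lambda>_. q) (\<lambda>_. q / real (card R)) (\<lambda>_. R) \<omega>"
    unfolding route_est_def R_def[symmetric] routes
    by (rule block_average_eq_shrinkage_est) (use assms(3) in \<open>auto simp: R_def\<close>)
qed

lemma overlap_weight_le:
  fixes p a b k g :: real
  assumes "0 < g" "g \<le> a" "g \<le> b" "k \<le> a"
  shows "p / a * (p / b) * k \<le> p / g * (p / g) * g"
proof -
  have "p / a * (p / b) * k = p\<^sup>2 / b * (k / a)"
    by (simp add: power2_eq_square)
  also have "\<dots> \<le> p\<^sup>2 / b"
    using assms by (intro mult_left_le) (auto simp: divide_le_eq_1)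
  also have "\<dots> \<le> p\<^sup>2 / g"
    using assms by (intro divide_left_mono) auto
  also have "\<dots> = p / g * (p / g) * g"
    using assms by (simp add: power2_eq_square)
  finally show ?thesis .
qed

lemma shrinkage_risk_le_common_block:
  assumes A: "\<And>s. s \<in> y \<Longrightarrow> finite (A s)" "\<And>s. s \<in> y \<Longrightarrow> B \<subseteq> A s"
    and p: "card B = 0 \<longrightarrow> p = 0" and \<sigma>: "\<forall>s\<in>y. \<forall>t\<in>y. 0 \<le> \<sigma> s t"
  shows "shrinkage_risk \<tau> \<sigma> y (\<lambda>_. p) (\<lambda>s. p / real (card (A s))) A
    \<le> shrinkage_risk \<tau> \<sigma> y (\<lambda>_. p) (\<lambda>_. p / real (card B)) (\<lambda>_. B)"
  unfolding shrinkage_risk_def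
proof (intro add_left_mono sum_mono mult_right_mono)
  fix s t assume st: "s \<in> y" "t \<in> y"
  show "0 \<le> \<sigma> s t"
    using \<sigma> st by blast
  show "p / real (card (A s)) * (p / real (card (A t))) * real (card (A s \<inter> A t))
      \<le> p / real (card B) * (p / real (card B)) * real (card (B \<inter> B))"
  proof (cases "card B = 0")
    case False
    have "card B \<le> card (A s)" "card B \<le> card (A t)" "card (A s \<inter> A t) \<le> card (A s)"
      using A st by (auto intro: card_mono)
    with False show ?thesis
      using overlap_weight_le[of "card B" "card (A s)" "card (A t)" "card (A s \<inter> A t)" p]
      by simp
  qed (use p in simp)
qed

lemma risk_nonneg: "0 \<le> risk M \<theta> y \<Theta>"
  unfolding risk_def by (rule Bochner_Integration.integral_nonneg) simp

locale travel_time_model =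
  fixes M :: "'a measure" and S :: "'seg set" and N :: nat and ys :: "nat \<Rightarrow> 'seg set"
    and \<theta> :: "'seg \<Rightarrow> 'a \<Rightarrow> real" and \<epsilon> :: "nat \<Rightarrow> 'seg \<Rightarrow> 'a \<Rightarrow> real"
    and \<mu> \<tau> :: real and \<sigma> :: "'seg \<Rightarrow> 'seg \<Rightarrow> real"
  assumes model: "travel_model M S N ys \<theta> \<epsilon> \<mu> \<tau> \<sigma>"
begin

sublocale prob_space M
  using model by (simp add: travel_model_def)

lemma expectation_theta: "s \<in> S \<Longrightarrow> expectation (\<theta> s) = \<mu>"
  and variance_theta: "s \<in> S \<Longrightarrow> variance (\<theta> s) = \<tau>\<^sup>2"
  using model unfolding travel_model_def by blast+

lemma square_integrable_theta: "s \<in> S \<Longrightarrow> square_integrable M (\<lambda>\<omega>. \<theta> s \<omega> - \<mu>)"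
  using model square_integrable_add[OF _ square_integrable_const, of "\<theta> s" "- \<mu>"]
  by (simp add: travel_model_def square_integrable_def)

lemma integral_theta: "s \<in> S \<Longrightarrow> (\<integral>\<omega>. \<theta> s \<omega> - \<mu> \<partial>M) = 0"
  using model square_integrable_imp_integrable[of "\<theta> s"] expectation_theta
  by (simp add: travel_model_def prob_space)

lemma square_integrable_error: "n < N \<Longrightarrow> s \<in> ys n \<Longrightarrow> square_integrable M (\<epsilon> n s)"
  using model by (simp add: travel_model_def square_integrable_def)

lemma integral_error: "n < N \<Longrightarrow> s \<in> ys n \<Longrightarrow> (\<integral>\<omega>. \<epsilon> n s \<omega> \<partial>M) = 0"
  using model by (simp add: travel_model_def)

lemma square_integrable_error_sum:
  "B \<subseteq> {n. n < N \<and> s \<in> ys n} \<Longrightarrow> square_integrable M (\<lambda>\<omega>. \<Sum>n\<in>B. \<epsilon> n s \<omega>)"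
  by (rule square_integrable_sum) (auto intro: square_integrable_error)

definition component :: "'seg + nat \<Rightarrow> 'a \<Rightarrow> 'seg \<Rightarrow> real" where
  "component i \<omega> = (case i of Inl s \<Rightarrow> (\<lambda>t\<in>{s}. \<theta> t \<omega>) | Inr n \<Rightarrow> (\<lambda>t\<in>ys n. \<epsilon> n t \<omega>))"

definition component_space :: "'seg + nat \<Rightarrow> ('seg \<Rightarrow> real) measure" where
  "component_space i = (case i of Inl s \<Rightarrow> PiM {s} (\<lambda>_. borel) | Inr n \<Rightarrow> PiM (ys n) (\<lambda>_. borel))"

lemma indep_components: "indep_vars component_space component (Inl ` S \<union> Inr ` {..<N})"
  using model unfolding travel_model_def component_space_def component_def by blast

lemma covariance_theta:
  assumes "s \<in> S" "t \<in> S"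
  shows "(\<integral>\<omega>. (\<theta> s \<omega> - \<mu>) * (\<theta> t \<omega> - \<mu>) \<partial>M) = (if s = t then \<tau>\<^sup>2 else 0)"
proof (cases "s = t")
  case True
  then show ?thesis
    using assms expectation_theta variance_theta by (simp add: power2_eq_square)
next
  case False
  have "(\<integral>\<omega>. (component (Inl s) \<omega> s - \<mu>) * (component (Inl t) \<omega> t - \<mu>) \<partial>M)
      = (\<integral>\<omega>. component (Inl s) \<omega> s - \<mu> \<partial>M) * (\<integral>\<omega>. component (Inl t) \<omega> t - \<mu> \<partial>M)"
    by (rule indep_vars_integral_mult[OF indep_components])
       (use assms False square_integrable_theta in
         \<open>auto simp: component_def component_space_def integrable_square_integrable\<close>)
  then show ?thesis
    using assms False integral_theta by (simp add: component_def)
qed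

lemma covariance_theta_error:
  assumes "s \<in> S" "n < N" "t \<in> ys n"
  shows "(\<integral>\<omega>. (\<theta> s \<omega> - \<mu>) * \<epsilon> n t \<omega> \<partial>M) = 0"
proof -
  have "(\<integral>\<omega>. (component (Inl s) \<omega> s - \<mu>) * component (Inr n) \<omega> t \<partial>M)
      = (\<integral>\<omega>. component (Inl s) \<omega> s - \<mu> \<partial>M) * (\<integral>\<omega>. component (Inr n) \<omega> t \<partial>M)"
    by (rule indep_vars_integral_mult[OF indep_components])
       (use assms square_integrable_theta square_integrable_error in
         \<open>auto simp: component_def component_space_def integrable_square_integrable\<close>)
  then show ?thesis
    using assms integral_theta by (simp add: component_def)
qed

lemma covariance_error:
  assumes "n < N" "m < N" "s \<in> ys n" "t \<in> ys m"
  shows "(\<integral>\<omega>. \<epsilon> n s \<omega> * \<epsilon> m t \<omega> \<partial>M) = (if n = m then \<sigma> s t else 0)"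
proof (cases "n = m")
  case True
  then show ?thesis
    using model assms by (simp add: travel_model_def)
next
  case False
  have "(\<integral>\<omega>. component (Inr n) \<omega> s * component (Inr m) \<omega> t \<partial>M)
      = (\<integral>\<omega>. component (Inr n) \<omega> s \<partial>M) * (\<integral>\<omega>. component (Inr m) \<omega> t \<partial>M)"
    by (rule indep_vars_integral_mult[OF indep_components])
       (use assms False square_integrable_error in
         \<open>auto simp: component_def component_space_def integrable_square_integrable\<close>)
  then show ?thesis
    using assms False integral_error by (simp add: component_def)
qed

lemma covariance_theta_error_sum:
  assumes "s \<in> S" "B \<subseteq> {n. n < N \<and> t \<in> ys n}"
  shows "(\<integral>\<omega>. (\<theta> s \<omega> - \<mu>) * (\<Sum>n\<in>B. \<epsilon> n t \<omega>) \<partial>M) = 0"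
proof -
  have "integrable M (\<lambda>\<omega>. (\<theta> s \<omega> - \<mu>) * \<epsilon> n t \<omega>)" if "n \<in> B" for n
    using assms that
    by (intro integrable_mult_square_integrable square_integrable_theta square_integrable_error) auto
  then show ?thesis
    using assms by (simp add: sum_distrib_left Bochner_Integration.integral_sum subset_iff
        covariance_theta_error)
qed

lemma covariance_error_sum:
  assumes "B \<subseteq> {n. n < N \<and> s \<in> ys n}" "C \<subseteq> {n. n < N \<and> t \<in> ys n}"
  shows "(\<integral>\<omega>. (\<Sum>n\<in>B. \<epsilon> n s \<omega>) * (\<Sum>m\<in>C. \<epsilon> m t \<omega>) \<partial>M) = real (card (B \<inter> C)) * \<sigma> s t"
proof -
  have "finite B" "finite C"
    using assms by (auto intro: finite_subset[OF _ finite_lessThan[of N]])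
  have "(\<integral>\<omega>. (\<Sum>n\<in>B. \<epsilon> n s \<omega>) * (\<Sum>m\<in>C. \<epsilon> m t \<omega>) \<partial>M)
      = (\<Sum>n\<in>B. \<Sum>m\<in>C. if n = m then \<sigma> s t else 0)"
    using integral_sum_mult_sum[where I=B and f="\<lambda>n. \<epsilon> n s" and J=C and g="\<lambda>m. \<epsilon> m t"
        and a="\<lambda>_. 1" and b="\<lambda>_. 1"] assms
    by (force simp: subset_iff square_integrable_error covariance_error intro: sum.cong)
  also have "\<dots> = real (card (B \<inter> C)) * \<sigma> s t"
    using \<open>finite B\<close> \<open>finite C\<close> by (simp add: sum.If_cases)
  finally show ?thesis .
qed

lemma risk_shrinkage_est:
  assumes y: "y \<subseteq> S" and A: "\<And>s. s \<in> y \<Longrightarrow> A s \<subseteq> {n. n < N \<and> s \<in> ys n}"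
  shows "risk M \<theta> y (shrinkage_est \<mu> \<theta> \<epsilon> y \<phi> c A) = shrinkage_risk \<tau> \<sigma> y \<phi> c A"
proof -
  have "finite y"
    using y model finite_subset by (auto simp: travel_model_def)
  define e where "e s \<omega> = (\<Sum>n\<in>A s. \<epsilon> n s \<omega>)" for s \<omega>
  define X where "X \<omega> = (\<Sum>s\<in>y. (\<phi> s - 1) * (\<theta> s \<omega> - \<mu>))" for \<omega>
  define Y where "Y \<omega> = (\<Sum>s\<in>y. c s * e s \<omega>)" for \<omega>
  have sq_theta: "square_integrable M (\<lambda>\<omega>. \<theta> s \<omega> - \<mu>)" if "s \<in> y" for s
    using that y by (blast intro: square_integrable_theta)
  have sq_e: "square_integrable M (e s)" if "s \<in> y" for s
    unfolding e_def using A[OF that] by (rule square_integrable_error_sum)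
  have sq: "square_integrable M X" "square_integrable M Y"
    unfolding X_def Y_def using sq_theta sq_e
    by (auto intro!: square_integrable_sum square_integrable_mult_left)
  have "shrinkage_est \<mu> \<theta> \<epsilon> y \<phi> c A \<omega> - (\<Sum>s\<in>y. \<theta> s \<omega>) = X \<omega> + Y \<omega>" for \<omega>
    by (simp add: shrinkage_est_def X_def Y_def e_def sum_subtractf[symmetric]
        sum.distrib[symmetric] algebra_simps)
  then have "risk M \<theta> y (shrinkage_est \<mu> \<theta> \<epsilon> y \<phi> c A)
      = (\<integral>\<omega>. X \<omega> * X \<omega> \<partial>M) + 2 * (\<integral>\<omega>. X \<omega> * Y \<omega> \<partial>M) + (\<integral>\<omega>. Y \<omega> * Y \<omega> \<partial>M)"
    unfolding risk_def by (simp add: integral_square_add[OF sq])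
  also have "(\<integral>\<omega>. X \<omega> * X \<omega> \<partial>M)
      = (\<Sum>s\<in>y. \<Sum>t\<in>y. (\<phi> s - 1) * (\<phi> t - 1) * (if s = t then \<tau>\<^sup>2 else 0))"
    unfolding X_def using sq_theta y
    by (subst integral_sum_mult_sum) (auto intro!: sum.cong simp: covariance_theta subset_iff)
  also have "\<dots> = (\<Sum>s\<in>y. \<Sum>t\<in>y. if s = t then (1 - \<phi> s)\<^sup>2 * \<tau>\<^sup>2 else 0)"
    by (intro sum.cong refl) (simp add: power2_eq_square algebra_simps)
  also have "\<dots> = (\<Sum>s\<in>y. (1 - \<phi> s)\<^sup>2 * \<tau>\<^sup>2)"
    using \<open>finite y\<close> by simp
  also have "(\<integral>\<omega>. X \<omega> * Y \<omega> \<partial>M) = 0"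
    unfolding X_def Y_def using sq_theta sq_e y A
    by (subst integral_sum_mult_sum) (auto simp: e_def covariance_theta_error_sum subset_iff)
  also have "(\<integral>\<omega>. Y \<omega> * Y \<omega> \<partial>M)
      = (\<Sum>s\<in>y. \<Sum>t\<in>y. c s * c t * real (card (A s \<inter> A t)) * \<sigma> s t)"
    unfolding Y_def using sq_e A
    by (subst integral_sum_mult_sum) (auto intro!: sum.cong simp: e_def covariance_error_sum)
  finally show ?thesis
    by (simp add: shrinkage_risk_def)
qed

lemma opt_seg_risk_le_opt_gseg_risk:
  assumes y: "y \<subseteq> S" and \<sigma>: "\<forall>s\<in>y. \<forall>t\<in>y. 0 \<le> \<sigma> s t"
  shows "opt_seg_risk M \<theta> \<epsilon> \<mu> N ys y \<le> opt_gseg_risk M \<theta> \<epsilon> \<mu> N ys y {y}"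
  unfolding opt_seg_risk_def opt_gseg_risk_def
proof (rule cInf_setcompr_mono[OF risk_nonneg, where q\<^sub>0="\<lambda>_. 0"])
  fix \<phi> :: "'seg set \<Rightarrow> real"
  assume "\<forall>S\<in>{y}. N_set N ys S = 0 \<longrightarrow> \<phi> S = 0"
  then have gseg: "N_set N ys y = 0 \<longrightarrow> \<phi> y = 0"
    by simp
  define A where "A = (\<lambda>s. {n. n < N \<and> s \<in> ys n})"
  define G where "G = {n. n < N \<and> y \<subseteq> ys n}"
  have A: "finite (A s)" "s \<in> y \<Longrightarrow> G \<subseteq> A s" for s
    by (auto simp: A_def G_def)
  have seg: "\<forall>s\<in>y. N_seg N ys s = 0 \<longrightarrow> \<phi> y = 0"
  proof (intro ballI impI)
    fix s assume "s \<in> y" "N_seg N ys s = 0"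
    then have "G = {}"
      using A by (auto simp: N_seg_def A_def)
    then show "\<phi> y = 0"
      using gseg by (simp add: N_set_def G_def)
  qed
  have "risk M \<theta> y (seg_est N ys (obs \<theta> \<epsilon>) \<mu> y (\<lambda>_. \<phi> y))
      = risk M \<theta> y (shrinkage_est \<mu> \<theta> \<epsilon> y (\<lambda>_. \<phi> y) (\<lambda>s. \<phi> y / real (card (A s))) A)"
    using seg by (simp add: seg_est_eq_shrinkage_est N_seg_def A_def)
  also have "\<dots> = shrinkage_risk \<tau> \<sigma> y (\<lambda>_. \<phi> y) (\<lambda>s. \<phi> y / real (card (A s))) A"
    by (rule risk_shrinkage_est[OF y]) (simp add: A_def)
  also have "\<dots> \<le> shrinkage_risk \<tau> \<sigma> y (\<lambda>_. \<phi> y) (\<lambda>_. \<phi> y / real (card G)) (\<lambda>_. G)"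
    using A gseg \<sigma> by (intro shrinkage_risk_le_common_block) (auto simp: N_set_def G_def)
  also have "\<dots> = risk M \<theta> y (shrinkage_est \<mu> \<theta> \<epsilon> y (\<lambda>_. \<phi> y) (\<lambda>_. \<phi> y / real (card G)) (\<lambda>_. G))"
    by (rule risk_shrinkage_est[OF y, symmetric]) (auto simp: G_def)
  also have "\<dots> = risk M \<theta> y (gseg_est N ys (obs \<theta> \<epsilon>) \<mu> {y} \<phi>)"
    using gseg by (simp add: gseg_est_single_eq_shrinkage_est N_set_def G_def)
  finally show "\<exists>\<psi>. (\<forall>s\<in>y. N_seg N ys s = 0 \<longrightarrow> \<psi> s = 0)
      \<and> risk M \<theta> y (seg_est N ys (obs \<theta> \<epsilon>) \<mu> y \<psi>) \<le> risk M \<theta> y (gseg_est N ys (obs \<theta> \<epsilon>) \<mu> {y} \<phi>)"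
    using seg by (intro exI[of _ "\<lambda>_. \<phi> y"] conjI)
qed simp

lemma opt_gseg_risk_le_opt_route_risk:
  assumes y: "y \<subseteq> S" and \<delta>: "\<delta> \<subseteq> {y}" and \<sigma>: "\<forall>s\<in>y. \<forall>t\<in>y. 0 \<le> \<sigma> s t"
  shows "opt_gseg_risk M \<theta> \<epsilon> \<mu> N ys y {y} \<le> opt_route_risk M \<theta> \<epsilon> \<mu> N ys y \<delta>"
  unfolding opt_gseg_risk_def opt_route_risk_def
proof (rule cInf_setcompr_mono[OF risk_nonneg, where q\<^sub>0=0])
  fix q :: real
  assume route: "card {n. n < N \<and> ys n \<in> \<delta>} = 0 \<longrightarrow> q = 0"
  define G where "G = {n. n < N \<and> y \<subseteq> ys n}"
  define R where "R = {n. n < N \<and> ys n \<in> \<delta>}"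
  have "finite G" "R \<subseteq> G"
    using \<delta> by (auto simp: G_def R_def)
  then have gseg: "N_set N ys y = 0 \<longrightarrow> q = 0"
    using route by (auto simp: N_set_def G_def[symmetric] R_def[symmetric] dest: card_mono)
  have "risk M \<theta> y (gseg_est N ys (obs \<theta> \<epsilon>) \<mu> {y} (\<lambda>_. q))
      = risk M \<theta> y (shrinkage_est \<mu> \<theta> \<epsilon> y (\<lambda>_. q) (\<lambda>_. q / real (card G)) (\<lambda>_. G))"
    using gseg by (simp add: gseg_est_single_eq_shrinkage_est N_set_def G_def)
  also have "\<dots> = shrinkage_risk \<tau> \<sigma> y (\<lambda>_. q) (\<lambda>_. q / real (card G)) (\<lambda>_. G)"
    by (rule risk_shrinkage_est[OF y]) (auto simp: G_def)
  also have "\<dots> \<le> shrinkage_risk \<tau> \<sigma> y (\<lambda>_. q) (\<lambda>_. q / real (card R)) (\<lambda>_. R)"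
    using \<open>finite G\<close> \<open>R \<subseteq> G\<close> route \<sigma>
    by (intro shrinkage_risk_le_common_block[where A="\<lambda>_. G", simplified]) (auto simp: R_def)
  also have "\<dots> = risk M \<theta> y (shrinkage_est \<mu> \<theta> \<epsilon> y (\<lambda>_. q) (\<lambda>_. q / real (card R)) (\<lambda>_. R))"
    using \<open>R \<subseteq> G\<close> by (intro risk_shrinkage_est[OF y, symmetric]) (auto simp: G_def)
  also have "\<dots> = risk M \<theta> y (route_est N ys (obs \<theta> \<epsilon>) \<mu> y \<delta> q)"
    using route \<delta> by (simp add: route_est_eq_shrinkage_est R_def)
  finally show "\<exists>\<psi>. (\<forall>S\<in>{y}. N_set N ys S = 0 \<longrightarrow> \<psi> S = 0)
      \<and> risk M \<theta> y (gseg_est N ys (obs \<theta> \<epsilon>) \<mu> {y} \<psi>) \<le> risk M \<theta> y (route_est N ys (obs \<theta> \<epsilon>) \<mu> y \<delta> q)"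
    using gseg by (intro exI[of _ "\<lambda>_. q"]) simp
qed simp

end

theorem proposition2p6:
  fixes M :: "'a measure" and S y :: "'seg set" and N :: nat and ys :: "nat \<Rightarrow> 'seg set"
    and \<theta> :: "'seg \<Rightarrow> 'a \<Rightarrow> real" and \<epsilon> :: "nat \<Rightarrow> 'seg \<Rightarrow> 'a \<Rightarrow> real"
    and \<mu> \<tau> :: real and \<sigma> :: "'seg \<Rightarrow> 'seg \<Rightarrow> real"
  assumes model: "travel_model M S N ys \<theta> \<epsilon> \<mu> \<tau> \<sigma>"
    and route: "y \<noteq> {}" "y \<subseteq> S"
    and nonneg: "\<forall>s\<in>y. \<forall>t\<in>y. \<sigma> s t \<ge> 0"
  shows "opt_seg_risk M \<theta> \<epsilon> \<mu> N ys y \<le> opt_gseg_risk M \<theta> \<epsilon> \<mu> N ys y {y}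
       \<and> opt_gseg_risk M \<theta> \<epsilon> \<mu> N ys y {y}
           \<le> opt_route_risk M \<theta> \<epsilon> \<mu> N ys y {r. \<exists>n<N. ys n = r \<and> r = y}"
proof -
  interpret travel_time_model M S N ys \<theta> \<epsilon> \<mu> \<tau> \<sigma>
    by (rule travel_time_model.intro) (rule model)
  have "{r. \<exists>n<N. ys n = r \<and> r = y} \<subseteq> {y}"
    by blast
  then show ?thesis
    using opt_seg_risk_le_opt_gseg_risk[OF route(2) nonneg]
      opt_gseg_risk_le_opt_route_risk[OF route(2) _ nonneg] by simp
qed

end
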